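(* Let $Q$ be a quiver of rank $3$ with no frozen vertices which is mutation-abundant, and let $\mathbf M=m_1m_2\cdots$ be an infinite reduced mutation sequence. Then exactly one of the following holds: (1) $Q^{(i)}_{\mathbf M}$ is acyclic for all sufficiently large $i$ (and then every sufficiently late mutation $m_i$ is at a source or sink of $Q^{(i-1)}_{\mathbf M}$); or (2) $Q^{(i)}_{\mathbf M}$ is an oriented 3-cycle for all sufficiently large $i$. In either case there is $i_0$ such that $m_i$ is cycle-preserving for $Q^{(i-1)}_{\mathbf M}$ for all $i>i_0$.
   Context: A quiver is a finite directed multigraph with no loops and no oriented 2-cycles; here all vertices are mutable. $Q|_S$ is the induced subquiver on $S$. Mutation $\mu_j$: for each path $i\to j\to k$ with $a$ arrows $i\to j$ and $b$ arrows $j\to k$ add $ab$ arrows $i\to k$, reverse all arrows at $j$, cancel 2-cycles. A mutation sequence $\mathbf M=m_1m_2\cdots$ has $Q^{(0)}_{\mathbf M}=Q$, $Q^{(i)}_{\mathbf M}=\mu_{m_i}(Q^{(i-1)}_{\mathbf M})$; reduced means $m_i\ne m_{i+1}$. A quiver without frozen vertices is mutation-abundant if every quiver mutation-equivalent to it has at least 2 arrows between every pair of vertices. A 3-vertex quiver is an oriented 3-cycle if its underlying directed graph is not acyclic. A vertex $j$ is cycle-preserving for $Q$ if whenever $Q|_{\{i,j,k\}}$ is an oriented 3-cycle containing $j$, so is $\mu_j(Q)|_{\{i,j,k\}}$. *)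

theory Defs
  imports Main
begin

text \<open>A quiver on vertex set V is represented by its arrow-count function:
  Q i j = number of arrows from i to j.\<close>

type_synonym quiver = "nat \<Rightarrow> nat \<Rightarrow> nat"

definition is_quiver :: "nat set \<Rightarrow> quiver \<Rightarrow> bool" where
  "is_quiver V Q \<longleftrightarrow> finite V
     \<and> (\<forall>i. Q i i = 0)
     \<and> (\<forall>i j. Q i j = 0 \<or> Q j i = 0)
     \<and> (\<forall>i j. i \<notin> V \<or> j \<notin> V \<longrightarrow> Q i j = 0)"

text \<open>Mutation at k: for each path i -> k -> j add products, reverse arrows at k,
  cancel 2-cycles.\<close>
definition mut :: "nat \<Rightarrow> quiver \<Rightarrow> quiver" where
  "mut k Q = (\<lambda>i j. if i = k \<or> j = k then Q j i
      else nat (int (Q i j) + int (Q i k * Q k j) - int (Q j i) - int (Q j k * Q k i)))"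

inductive mut_equiv :: "nat set \<Rightarrow> quiver \<Rightarrow> quiver \<Rightarrow> bool" for V where
  refl: "mut_equiv V Q Q"
| step: "mut_equiv V Q Q' \<Longrightarrow> k \<in> V \<Longrightarrow> mut_equiv V Q (mut k Q')"

definition mutation_abundant :: "nat set \<Rightarrow> quiver \<Rightarrow> bool" where
  "mutation_abundant V Q \<longleftrightarrow>
     (\<forall>Q'. mut_equiv V Q Q' \<longrightarrow>
        (\<forall>i\<in>V. \<forall>j\<in>V. i \<noteq> j \<longrightarrow> Q' i j + Q' j i \<ge> 2))"

definition restrict_q :: "quiver \<Rightarrow> nat set \<Rightarrow> quiver" where
  "restrict_q Q S = (\<lambda>i j. if i \<in> S \<and> j \<in> S then Q i j else 0)"

definition arrows :: "quiver \<Rightarrow> (nat \<times> nat) set" where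
  "arrows Q = {(i, j). Q i j > 0}"

definition acyclic_q :: "quiver \<Rightarrow> bool" where
  "acyclic_q Q \<longleftrightarrow> acyclic (arrows Q)"

definition oriented_3cycle :: "quiver \<Rightarrow> nat set \<Rightarrow> bool" where
  "oriented_3cycle Q S \<longleftrightarrow> card S = 3 \<and> \<not> acyclic_q (restrict_q Q S)"

definition cycle_preserving :: "nat set \<Rightarrow> quiver \<Rightarrow> nat \<Rightarrow> bool" where
  "cycle_preserving V Q j \<longleftrightarrow>
     (\<forall>i k. {i, j, k} \<subseteq> V \<longrightarrow> oriented_3cycle Q {i, j, k}
        \<longrightarrow> oriented_3cycle (mut j Q) {i, j, k})"

definition is_source :: "quiver \<Rightarrow> nat \<Rightarrow> bool" where
  "is_source Q k \<longleftrightarrow> (\<forall>i. Q i k = 0)"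

definition is_sink :: "quiver \<Rightarrow> nat \<Rightarrow> bool" where
  "is_sink Q k \<longleftrightarrow> (\<forall>j. Q k j = 0)"

text \<open>Mutation sequence M = m_1 m_2 ..., indexed from 1 (M 0 unused):
  Q^(0) = Q, Q^(i) = mu_{m_i}(Q^(i-1)).\<close>
fun qseq :: "quiver \<Rightarrow> (nat \<Rightarrow> nat) \<Rightarrow> nat \<Rightarrow> quiver" where
  "qseq Q M 0 = Q"
| "qseq Q M (Suc i) = mut (M (Suc i)) (qseq Q M i)"

end

theory Submission
  imports Defs
begin

(* Mutation abundance keeps at least two arrows between any two vertices along the sequence, so
   each quiver is acyclic exactly when it has no oriented 3-cycle. Mutation at k only changes the
   block of w arrows between the other two vertices; if a, b are the blocks at k, the new block is
   w at a source or sink, w + a b (and the quiver becomes cyclic) in the middle of a transitive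
   path, and |a b - w| on a 3-cycle.
   Call a 3-cycle heavy at k if the block opposite k is the heaviest. If it is heavy at k' and we
   mutate at k <> k', then b >= a >= 2 and b >= w for the block b opposite k', so the new block
   a b - w >= 2 b - w >= b is the heaviest: the result is heavy at k. Hence once a reduced
   sequence reaches a heavy cycle it stays cyclic. Otherwise no mutation increases the total
   number of arrows and each mutation of a 3-cycle decreases it, so eventually no quiver is
   cyclic, and then every mutation is at a source or sink. Cycle preservation is vacuous in the
   first regime and automatic in the second. *)

definition has_3cycle :: "quiver \<Rightarrow> bool" where
  "has_3cycle Q \<longleftrightarrow> (\<exists>i j k. 0 < Q i j \<and> 0 < Q j k \<and> 0 < Q k i)"

definition weight :: "quiver \<Rightarrow> nat \<Rightarrow> nat \<Rightarrow> nat" where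
  "weight Q i j = Q i j + Q j i"

definition total_arrows :: "nat set \<Rightarrow> quiver \<Rightarrow> nat" where
  "total_arrows V Q = (\<Sum>i\<in>V. \<Sum>j\<in>V. Q i j)"

definition abundant :: "nat set \<Rightarrow> quiver \<Rightarrow> bool" where
  "abundant V Q \<longleftrightarrow> (\<forall>i\<in>V. \<forall>j\<in>V. i \<noteq> j \<longrightarrow> 2 \<le> weight Q i j)"

definition heavy_cycle :: "nat set \<Rightarrow> quiver \<Rightarrow> nat \<Rightarrow> bool" where
  "heavy_cycle V Q k \<longleftrightarrow> has_3cycle Q
     \<and> (\<forall>i\<in>V. \<forall>j\<in>V. i \<noteq> k \<longrightarrow> j \<noteq> k \<longrightarrow> i \<noteq> j \<longrightarrow> weight Q k i \<le> weight Q i j)"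

lemma weight_commute: "weight Q i j = weight Q j i"
  by (simp add: weight_def)

lemma quiver_arrowD:
  assumes "is_quiver V Q" "0 < Q i j"
  shows "i \<in> V" "j \<in> V" "i \<noteq> j" "Q j i = 0"
proof -
  have "Q i i = 0" "Q i j = 0 \<or> Q j i = 0"
    and "i \<notin> V \<or> j \<notin> V \<Longrightarrow> Q i j = 0"
    using assms(1) unfolding is_quiver_def by auto
  then show "i \<in> V" "j \<in> V" "i \<noteq> j" "Q j i = 0"
    using assms(2) by auto
qed

lemma is_quiver_mut:
  assumes "is_quiver V Q" "k \<in> V"
  shows "is_quiver V (mut k Q)"
proof -
  have Q: "finite V" "\<And>i. Q i i = 0" "\<And>i j. Q i j = 0 \<or> Q j i = 0"
    "\<And>i j. i \<notin> V \<or> j \<notin> V \<Longrightarrow> Q i j = 0"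
    using assms(1) unfolding is_quiver_def by auto
  have "mut k Q i i = 0" for i
    using Q(2) unfolding mut_def by simp
  moreover have "mut k Q i j = 0 \<or> mut k Q j i = 0" for i j
    using Q(3)[of i j] unfolding mut_def by auto
  moreover have "mut k Q i j = 0" if "i \<notin> V \<or> j \<notin> V" for i j
    using Q(4) assms(2) that unfolding mut_def by auto
  ultimately show ?thesis
    using Q(1) unfolding is_quiver_def by blast
qed

lemma is_quiver_mut_equiv:
  assumes "mut_equiv V Q Q'" "is_quiver V Q"
  shows "is_quiver V Q'"
  using assms by induction (simp_all add: is_quiver_mut)

lemma mut_incident [simp]: "mut k Q k i = Q i k" "mut k Q i k = Q k i"
  by (simp_all add: mut_def)

lemma weight_mut_incident [simp]: "weight (mut k Q) k i = weight Q k i"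
  by (simp add: weight_def add.commute)

lemma mut_not_incident:
  assumes "i \<noteq> k" "j \<noteq> k"
  shows "mut k Q i j = Q i j + Q i k * Q k j - Q j i - Q j k * Q k i"
proof -
  have "nat (int a + int b - int c - int d) = a + b - c - d" for a b c d :: nat
    by arith
  then show ?thesis
    using assms by (simp add: mut_def del: of_nat_mult)
qed

lemma obtain_other_vertices:
  assumes "card V = 3" "k \<in> V"
  obtains i j where "V = {k, i, j}" "distinct [k, i, j]"
proof -
  have "card (V - {k}) = 2"
    using assms by (simp add: card_Diff_singleton)
  then obtain i j where ij: "V - {k} = {i, j}" "i \<noteq> j"
    by (auto simp: card_2_iff)
  have "V = insert k (V - {k})"
    using assms(2) by (simp add: insert_absorb)
  then have "V = {k, i, j}"
    by (simp add: ij(1))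
  moreover have "k \<noteq> i" "k \<noteq> j"
    using ij(1) by blast+
  ultimately show thesis
    using that ij(2) by simp
qed

lemma obtain_third_vertex:
  assumes "card V = 3" "k \<in> V" "i \<in> V" "k \<noteq> i"
  obtains j where "V = {k, i, j}" "distinct [k, i, j]"
proof -
  obtain a b where ab: "V = {k, a, b}" "distinct [k, a, b]"
    using obtain_other_vertices assms(1,2) .
  then consider "i = a" | "i = b"
    using assms(3,4) by blast
  then show thesis
  proof cases
    case 1
    then show thesis
      using that[of b] ab by simp
  next
    case 2
    then have "V = {k, i, a}"
      using ab(1) by auto
    then show thesis
      using that[of a] ab 2 by auto
  qed
qed

lemma has_3cycle_iff:
  assumes "is_quiver V Q" "V = {k, i, j}" "distinct [k, i, j]"
  shows "has_3cycle Q \<longleftrightarrow>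
    (0 < Q k i \<and> 0 < Q i j \<and> 0 < Q j k) \<or> (0 < Q k j \<and> 0 < Q j i \<and> 0 < Q i k)"
proof
  assume "has_3cycle Q"
  then obtain a b c where abc: "0 < Q a b" "0 < Q b c" "0 < Q c a"
    unfolding has_3cycle_def by blast
  moreover have "a \<noteq> b" "b \<noteq> c" "c \<noteq> a"
    using abc quiver_arrowD(3)[OF assms(1)] by blast+
  moreover have "a \<in> {k, i, j}" "b \<in> {k, i, j}" "c \<in> {k, i, j}"
    using abc quiver_arrowD(1)[OF assms(1)] unfolding assms(2) by blast+
  ultimately show "(0 < Q k i \<and> 0 < Q i j \<and> 0 < Q j k) \<or> (0 < Q k j \<and> 0 < Q j i \<and> 0 < Q i k)"
    by (elim insertE emptyE) simp_all
qed (unfold has_3cycle_def, blast)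

lemma total_arrows_eq:
  assumes "is_quiver V Q" "V = {k, i, j}" "distinct [k, i, j]"
  shows "total_arrows V Q = weight Q k i + weight Q k j + weight Q i j"
proof -
  have "Q x x = 0" for x
    using assms(1) unfolding is_quiver_def by blast
  then show ?thesis
    using assms(3) unfolding total_arrows_def weight_def assms(2) by simp
qed

lemma heavy_cycle_iff:
  assumes "V = {k, i, j}" "distinct [k, i, j]"
  shows "heavy_cycle V Q k \<longleftrightarrow>
    has_3cycle Q \<and> weight Q k i \<le> weight Q i j \<and> weight Q k j \<le> weight Q i j"
  using assms unfolding heavy_cycle_def by (auto simp: weight_commute)

lemma source_sink_iff:
  assumes "is_quiver V Q" "V = {k, i, j}" "distinct [k, i, j]"
  shows "is_source Q k \<longleftrightarrow> Q i k = 0 \<and> Q j k = 0"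
    and "is_sink Q k \<longleftrightarrow> Q k i = 0 \<and> Q k j = 0"
proof -
  have "Q x k = 0" "Q k x = 0" if "x \<notin> {i, j}" for x
    using that assms unfolding is_quiver_def by auto
  then show "is_source Q k \<longleftrightarrow> Q i k = 0 \<and> Q j k = 0"
    and "is_sink Q k \<longleftrightarrow> Q k i = 0 \<and> Q k j = 0"
    unfolding is_source_def is_sink_def by (metis insert_iff singletonD)+
qed

lemma mut_at_source_or_sink:
  assumes "is_quiver V Q" "V = {k, i, j}" "distinct [k, i, j]" "is_source Q k \<or> is_sink Q k"
  shows "\<not> has_3cycle Q" "weight (mut k Q) i j = weight Q i j"
proof -
  have "Q i k * Q k j = 0" "Q j k * Q k i = 0"
    using assms(4) unfolding is_source_def is_sink_def by auto
  moreover have "Q i j = 0 \<or> Q j i = 0"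
    using assms(1) unfolding is_quiver_def by auto
  ultimately show "weight (mut k Q) i j = weight Q i j"
    using assms(3) by (auto simp: weight_def mut_not_incident)
  show "\<not> has_3cycle Q"
    using assms(4) unfolding has_3cycle_iff[OF assms(1-3)] is_source_def is_sink_def by auto
qed

lemma heavy_cycle_mut_transitive:
  assumes "is_quiver V Q" "V = {k, i, j}" "distinct [k, i, j]"
    and "0 < Q i k" "0 < Q k j" "0 < Q i j"
  shows "heavy_cycle V (mut k Q) k"
proof -
  have zero: "Q k i = 0" "Q j k = 0" "Q j i = 0"
    using quiver_arrowD(4)[OF assms(1)] assms(4-6) by auto
  have mut_ij: "mut k Q i j = Q i j + Q i k * Q k j" "mut k Q j i = 0"
    using assms(3) zero by (simp_all add: mut_not_incident)
  have "has_3cycle (mut k Q)"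
    unfolding has_3cycle_def using assms(4-6) mut_ij
    by (intro exI[of _ k] exI[of _ i] exI[of _ j]) simp
  moreover have "Q i k \<le> Q i k * Q k j" "Q k j \<le> Q i k * Q k j"
    using assms(4,5) by simp_all
  ultimately show ?thesis
    unfolding heavy_cycle_iff[OF assms(2,3)] using zero mut_ij
    by (simp add: weight_def trans_le_add2)
qed

lemma weight_mut_3cycle:
  assumes "is_quiver V Q" "V = {k, i, j}" "distinct [k, i, j]" "has_3cycle Q"
  shows "weight (mut k Q) i j =
    (if weight Q i j < weight Q k i * weight Q k j then weight Q k i * weight Q k j - weight Q i j
     else weight Q i j - weight Q k i * weight Q k j)"
proof -
  consider "0 < Q k i" "0 < Q i j" "0 < Q j k" | "0 < Q k j" "0 < Q j i" "0 < Q i k"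
    using assms(4) unfolding has_3cycle_iff[OF assms(1-3)] by auto
  then show ?thesis
  proof cases
    case 1
    then have "Q i k = 0" "Q j i = 0" "Q k j = 0"
      using quiver_arrowD(4)[OF assms(1)] by auto
    then show ?thesis
      using assms(3) by (simp add: weight_def mut_not_incident mult.commute)
  next
    case 2
    then have "Q k i = 0" "Q i j = 0" "Q j k = 0"
      using quiver_arrowD(4)[OF assms(1)] by auto
    then show ?thesis
      using assms(3) by (simp add: weight_def mut_not_incident mult.commute)
  qed
qed

lemma has_3cycle_mut_3cycle:
  assumes "is_quiver V Q" "V = {k, i, j}" "distinct [k, i, j]" "has_3cycle Q"
    and "weight Q i j < weight Q k i * weight Q k j"
  shows "has_3cycle (mut k Q)"
proof -
  consider "0 < Q k i" "0 < Q i j" "0 < Q j k" | "0 < Q k j" "0 < Q j i" "0 < Q i k"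
    using assms(4) unfolding has_3cycle_iff[OF assms(1-3)] by auto
  then show ?thesis
  proof cases
    case 1
    then have "Q i k = 0" "Q j i = 0" "Q k j = 0"
      using quiver_arrowD(4)[OF assms(1)] by auto
    then have "0 < mut k Q k j" "0 < mut k Q j i" "0 < mut k Q i k"
      using 1 assms(3,5) by (simp_all add: weight_def mut_not_incident mult.commute)
    then show ?thesis
      unfolding has_3cycle_def by blast
  next
    case 2
    then have "Q k i = 0" "Q i j = 0" "Q j k = 0"
      using quiver_arrowD(4)[OF assms(1)] by auto
    then have "0 < mut k Q k i" "0 < mut k Q i j" "0 < mut k Q j k"
      using 2 assms(3,5) by (simp_all add: weight_def mut_not_incident mult.commute)
    then show ?thesis
      unfolding has_3cycle_def by blast
  qed
qed

lemma heavy_cycle_mut: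
  assumes "is_quiver V Q" "V = {k, i, j}" "distinct [k, i, j]" "abundant V Q" "heavy_cycle V Q i"
  shows "heavy_cycle V (mut k Q) k"
proof -
  have "V = {i, k, j}" "distinct [i, k, j]"
    using assms(2,3) by auto
  then have cyc: "has_3cycle Q"
    and le: "weight Q k i \<le> weight Q k j" "weight Q i j \<le> weight Q k j"
    using assms(5) heavy_cycle_iff by (auto simp: weight_commute)
  have "2 \<le> weight Q k i"
    using assms(2-4) unfolding abundant_def by auto
  then have "2 * weight Q k j \<le> weight Q k i * weight Q k j"
    by simp
  then have "weight Q i j < weight Q k i * weight Q k j"
    and "weight Q k j \<le> weight Q k i * weight Q k j - weight Q i j"
    using le \<open>2 \<le> weight Q k i\<close> by linarith+
  then show ?thesis
    unfolding heavy_cycle_iff[OF assms(2,3)]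
    using has_3cycle_mut_3cycle[OF assms(1-3) cyc] weight_mut_3cycle[OF assms(1-3) cyc] le(1)
    by auto
qed

lemma mut_3cycle_cases:
  assumes "is_quiver V Q" "V = {k, i, j}" "distinct [k, i, j]" "abundant V Q" "has_3cycle Q"
  shows "heavy_cycle V (mut k Q) k \<or> total_arrows V (mut k Q) < total_arrows V Q"
proof -
  define a c w where "a = weight Q k i" and "c = weight Q k j" and "w = weight Q i j"
  have "2 \<le> a" "2 \<le> c"
    using assms(2-4) unfolding abundant_def a_def c_def by auto
  then have ac: "2 * a \<le> a * c" "2 * c \<le> a * c"
    by simp_all
  have "k \<in> V"
    using assms(2) by simp
  have total: "total_arrows V Q = a + c + w"
    "total_arrows V (mut k Q) = a + c + weight (mut k Q) i j"
    using total_arrows_eq[OF assms(1-3)]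
      total_arrows_eq[OF is_quiver_mut[OF assms(1) \<open>k \<in> V\<close>] assms(2,3)]
    unfolding a_def c_def w_def by simp_all
  have w': "weight (mut k Q) i j = (if w < a * c then a * c - w else w - a * c)"
    using weight_mut_3cycle[OF assms(1-3,5)] unfolding a_def c_def w_def .
  show ?thesis
  proof (cases "w < a * c")
    case True
    show ?thesis
    proof (cases "a \<le> a * c - w \<and> c \<le> a * c - w")
      case True
      then have "heavy_cycle V (mut k Q) k"
        unfolding heavy_cycle_iff[OF assms(2,3)]
        using has_3cycle_mut_3cycle[OF assms(1-3,5)] w' \<open>w < a * c\<close>
        unfolding a_def c_def w_def by auto
      then show ?thesis ..
    next
      case False
      \<comment> \<open>the new block is lighter than a or c, hence than half of a c, hence than w\<close>
      then have "a * c - w < w"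
        using ac \<open>w < a * c\<close> by linarith
      then have "weight (mut k Q) i j < w"
        using w' \<open>w < a * c\<close> by simp
      then show ?thesis
        using total by simp
    qed
  next
    case False
    then show ?thesis
      using total w' \<open>2 \<le> a\<close> \<open>2 \<le> c\<close> by simp
  qed
qed

lemma mut_step_cases:
  assumes "is_quiver V Q" "V = {k, i, j}" "distinct [k, i, j]" "abundant V Q"
  obtains (source_or_sink) "is_source Q k \<or> is_sink Q k" "\<not> has_3cycle Q"
      "total_arrows V (mut k Q) = total_arrows V Q"
    | (heavy) "heavy_cycle V (mut k Q) k"
    | (shrinking) "has_3cycle Q" "total_arrows V (mut k Q) < total_arrows V Q"
proof -
  have through:
    "heavy_cycle V (mut k Q) k \<or> has_3cycle Q \<and> total_arrows V (mut k Q) < total_arrows V Q"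
    if V: "V = {k, x, y}" "distinct [k, x, y]" and path: "0 < Q x k" "0 < Q k y" for x y
  proof (cases "0 < Q x y")
    case True
    then show ?thesis
      using heavy_cycle_mut_transitive[OF assms(1) V path] by simp
  next
    case False
    then have "0 < Q y x"
      using assms(4) V unfolding abundant_def weight_def by auto
    then have "has_3cycle Q"
      unfolding has_3cycle_def using path by blast
    then show ?thesis
      using mut_3cycle_cases[OF assms(1) V assms(4)] by blast
  qed
  have "0 < Q k i \<or> 0 < Q i k" "0 < Q k j \<or> 0 < Q j k"
    using assms(2-4) unfolding abundant_def weight_def by auto
  moreover have "Q k i = 0 \<or> Q i k = 0" "Q k j = 0 \<or> Q j k = 0"
    using assms(1) unfolding is_quiver_def by auto
  ultimately consider "is_source Q k \<or> is_sink Q k"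
    | "0 < Q i k" "0 < Q k j" | "0 < Q j k" "0 < Q k i"
    unfolding source_sink_iff[OF assms(1-3)] by auto
  then show thesis
  proof cases
    case 1
    have "k \<in> V"
      using assms(2) by simp
    then have "total_arrows V (mut k Q) = total_arrows V Q"
      using total_arrows_eq[OF assms(1-3)] total_arrows_eq[OF is_quiver_mut[OF assms(1)] assms(2,3)]
        mut_at_source_or_sink(2)[OF assms(1-3) 1] by simp
    then show thesis
      using source_or_sink 1 mut_at_source_or_sink(1)[OF assms(1-3) 1] by blast
  next
    case 2
    then show thesis
      using through[OF assms(2,3)] heavy shrinking by blast
  next
    case 3
    have "V = {k, j, i}" "distinct [k, j, i]"
      using assms(2,3) by auto
    then show thesis
      using through 3 heavy shrinking by blast
  qed
qed

lemma predecessors_subset_if_no_3cycle: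
  assumes "is_quiver V Q" "\<not> has_3cycle Q"
    and complete: "\<And>x y. x \<in> V \<Longrightarrow> y \<in> V \<Longrightarrow> x \<noteq> y \<Longrightarrow> 0 < weight Q x y"
    and "0 < Q x y"
  shows "insert x {z \<in> V. 0 < Q z x} \<subseteq> {z \<in> V. 0 < Q z y}"
proof
  fix z
  assume z: "z \<in> insert x {z \<in> V. 0 < Q z x}"
  show "z \<in> {z \<in> V. 0 < Q z y}"
  proof (cases "z = x")
    case False
    then have "z \<in> V" "0 < Q z x"
      using z by auto
    moreover have "y \<in> V"
      using quiver_arrowD(2)[OF assms(1,4)] .
    moreover have "z \<noteq> y"
      using quiver_arrowD(4)[OF assms(1,4)] \<open>0 < Q z x\<close> by auto
    moreover have "\<not> 0 < Q y z"
    proof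
      assume "0 < Q y z"
      with assms(4) \<open>0 < Q z x\<close> have "has_3cycle Q"
        unfolding has_3cycle_def by (intro exI[of _ x] exI[of _ y] exI[of _ z]) simp
      with assms(2) show False ..
    qed
    ultimately show ?thesis
      using complete[of z y] unfolding weight_def by simp
  qed (use quiver_arrowD(1)[OF assms(1,4)] assms(4) in simp)
qed

lemma acyclic_q_iff_no_3cycle:
  assumes "is_quiver V Q"
    and complete: "\<And>x y. x \<in> V \<Longrightarrow> y \<in> V \<Longrightarrow> x \<noteq> y \<Longrightarrow> 0 < weight Q x y"
  shows "acyclic_q Q \<longleftrightarrow> \<not> has_3cycle Q"
proof
  assume "acyclic_q Q"
  show "\<not> has_3cycle Q"
  proof
    assume "has_3cycle Q"
    then obtain a b c where "(a, b) \<in> arrows Q" "(b, c) \<in> arrows Q" "(c, a) \<in> arrows Q"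
      unfolding has_3cycle_def arrows_def by blast
    then have "(a, a) \<in> (arrows Q)\<^sup>+"
      by (meson trancl.r_into_trancl trancl_into_trancl)
    with \<open>acyclic_q Q\<close> show False
      unfolding acyclic_q_def acyclic_def by blast
  qed
next
  assume no_cycle: "\<not> has_3cycle Q"
  have "finite V"
    using assms(1) unfolding is_quiver_def by blast
  define indeg where "indeg x = card {z \<in> V. 0 < Q z x}" for x
  have indeg_less: "indeg x < indeg y" if "0 < Q x y" for x y
  proof -
    have "card (insert x {z \<in> V. 0 < Q z x}) \<le> indeg y"
      unfolding indeg_def using \<open>finite V\<close>
      by (intro card_mono predecessors_subset_if_no_3cycle[OF assms(1) no_cycle complete that]) simp_all
    moreover have "x \<notin> {z \<in> V. 0 < Q z x}"
      using assms(1) unfolding is_quiver_def by simp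
    ultimately show ?thesis
      unfolding indeg_def using \<open>finite V\<close> by simp
  qed
  have "indeg x < indeg y" if "(x, y) \<in> (arrows Q)\<^sup>+" for x y
    using that by (induction rule: trancl_induct) (auto simp: arrows_def dest: indeg_less)
  then show "acyclic_q Q"
    unfolding acyclic_q_def acyclic_def by blast
qed

lemma oriented_3cycle_iff:
  assumes "is_quiver V Q" "card V = 3"
  shows "oriented_3cycle Q V \<longleftrightarrow> \<not> acyclic_q Q"
proof -
  have "restrict_q Q V = Q"
    using assms(1) unfolding restrict_q_def is_quiver_def by (intro ext) auto
  then show ?thesis
    using assms(2) unfolding oriented_3cycle_def by simp
qed

lemma cycle_preservingI:
  assumes "card V = 3" "oriented_3cycle Q V \<Longrightarrow> oriented_3cycle (mut j Q) V"
  shows "cycle_preserving V Q j"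
  unfolding cycle_preserving_def
proof (intro allI impI)
  fix i k
  assume sub: "{i, j, k} \<subseteq> V" and cyc: "oriented_3cycle Q {i, j, k}"
  have "finite V"
    by (rule card_ge_0_finite) (simp add: assms(1))
  then have "{i, j, k} = V"
    using card_subset_eq[OF _ sub] cyc assms(1) unfolding oriented_3cycle_def by simp
  then show "oriented_3cycle (mut j Q) {i, j, k}"
    using assms(2) cyc by simp
qed

lemma eventually_not_if_strict_descent:
  fixes T :: "nat \<Rightarrow> nat"
  assumes "\<And>n. T (Suc n) \<le> T n" "\<And>n. P n \<Longrightarrow> T (Suc n) < T n"
  shows "\<forall>\<^sub>F n in sequentially. \<not> P n"
proof (rule ccontr)
  assume "\<not> ?thesis"
  then have frequent: "\<exists>m\<ge>n. P m" for n
    unfolding not_eventually frequently_sequentially by simp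
  have "\<exists>n. T n + t \<le> T 0" for t
  proof (induction t)
    case 0
    show ?case
      by (rule exI[of _ 0]) simp
  next
    case (Suc t)
    then obtain n where "T n + t \<le> T 0" ..
    moreover obtain m where "n \<le> m" "P m"
      using frequent by blast
    ultimately have "T (Suc m) + Suc t \<le> T 0"
      using lift_Suc_antimono_le[of T, OF assms(1) \<open>n \<le> m\<close>] assms(2)[of m] by linarith
    then show ?case ..
  qed
  from this[of "Suc (T 0)"] show False
    by auto
qed

locale abundant_rank3_sequence =
  fixes V :: "nat set" and Q :: quiver and M :: "nat \<Rightarrow> nat"
  assumes card_V: "card V = 3"
    and is_quiver_Q: "is_quiver V Q"
    and mutation_abundant_Q: "mutation_abundant V Q"
    and M_in_V: "1 \<le> i \<Longrightarrow> M i \<in> V"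
    and M_reduced: "1 \<le> i \<Longrightarrow> M i \<noteq> M (Suc i)"
begin

abbreviation Qs :: "nat \<Rightarrow> quiver" where
  "Qs \<equiv> qseq Q M"

lemma mut_equiv_Qs: "mut_equiv V Q (Qs n)"
  by (induction n) (simp_all add: mut_equiv.refl mut_equiv.step M_in_V)

lemma is_quiver_Qs: "is_quiver V (Qs n)"
  using is_quiver_mut_equiv[OF mut_equiv_Qs is_quiver_Q] .

lemma abundant_Qs: "abundant V (Qs n)"
  using mutation_abundant_Q mut_equiv_Qs
  unfolding mutation_abundant_def abundant_def weight_def by blast

lemma Qs_step_cases:
  obtains (source_or_sink) "is_source (Qs n) (M (Suc n)) \<or> is_sink (Qs n) (M (Suc n))"
      "\<not> has_3cycle (Qs n)" "total_arrows V (Qs (Suc n)) = total_arrows V (Qs n)"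
    | (heavy) "heavy_cycle V (Qs (Suc n)) (M (Suc n))"
    | (shrinking) "has_3cycle (Qs n)" "total_arrows V (Qs (Suc n)) < total_arrows V (Qs n)"
proof -
  have "M (Suc n) \<in> V"
    using M_in_V by simp
  then obtain i j where ij: "V = {M (Suc n), i, j}" "distinct [M (Suc n), i, j]"
    by (rule obtain_other_vertices[OF card_V])
  show thesis
    by (cases rule: mut_step_cases[OF is_quiver_Qs[of n] ij abundant_Qs[of n]])
      (use that in simp_all)
qed

lemma heavy_cycle_Qs_Suc:
  assumes "1 \<le> n" "heavy_cycle V (Qs n) (M n)"
  shows "heavy_cycle V (Qs (Suc n)) (M (Suc n))"
proof -
  have "M (Suc n) \<in> V" "M n \<in> V" "M (Suc n) \<noteq> M n"
    using M_in_V M_reduced assms(1) by (simp_all add: eq_commute)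
  then obtain j where j: "V = {M (Suc n), M n, j}" "distinct [M (Suc n), M n, j]"
    by (rule obtain_third_vertex[OF card_V])
  from heavy_cycle_mut[OF is_quiver_Qs[of n] j abundant_Qs[of n] assms(2)] show ?thesis
    by simp
qed

lemma eventually_3cycle_dichotomy:
  "(\<forall>\<^sub>F n in sequentially. has_3cycle (Qs n)) \<or> (\<forall>\<^sub>F n in sequentially. \<not> has_3cycle (Qs n))"
proof (cases "\<exists>n\<ge>1. heavy_cycle V (Qs n) (M n)")
  case True
  then obtain n where "1 \<le> n" "heavy_cycle V (Qs n) (M n)"
    by blast
  have "heavy_cycle V (Qs m) (M m)" if "n \<le> m" for m
    using that
  proof (induction m rule: dec_induct)
    case base
    show ?case by fact
  next
    case (step m)
    then show ?case
      using heavy_cycle_Qs_Suc \<open>1 \<le> n\<close> by simp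
  qed
  then have "\<forall>\<^sub>F m in sequentially. has_3cycle (Qs m)"
    unfolding eventually_sequentially heavy_cycle_def by blast
  then show ?thesis ..
next
  case False
  then have no_heavy: "\<not> heavy_cycle V (Qs (Suc n)) (M (Suc n))" for n
    by (auto simp del: qseq.simps)
  have "total_arrows V (Qs (Suc n)) \<le> total_arrows V (Qs n)" for n
    by (cases rule: Qs_step_cases[of n]) (use no_heavy in auto)
  moreover have "total_arrows V (Qs (Suc n)) < total_arrows V (Qs n)" if "has_3cycle (Qs n)" for n
    by (cases rule: Qs_step_cases[of n]) (use no_heavy that in auto)
  ultimately have "\<forall>\<^sub>F n in sequentially. \<not> has_3cycle (Qs n)"
    by (rule eventually_not_if_strict_descent)
  then show ?thesis ..
qed

lemma acyclic_q_Qs_iff: "acyclic_q (Qs n) \<longleftrightarrow> \<not> has_3cycle (Qs n)"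
proof (rule acyclic_q_iff_no_3cycle[OF is_quiver_Qs])
  fix x y
  assume "x \<in> V" "y \<in> V" "x \<noteq> y"
  then show "0 < weight (Qs n) x y"
    using abundant_Qs[of n] unfolding abundant_def by fastforce
qed

lemma oriented_3cycle_Qs_iff: "oriented_3cycle (Qs n) V \<longleftrightarrow> has_3cycle (Qs n)"
  using oriented_3cycle_iff[OF is_quiver_Qs card_V] acyclic_q_Qs_iff by simp

lemma eventually_source_or_sink:
  assumes "\<forall>\<^sub>F n in sequentially. \<not> has_3cycle (Qs n)"
  shows "\<forall>\<^sub>F i in sequentially. is_source (Qs (i - 1)) (M i) \<or> is_sink (Qs (i - 1)) (M i)"
proof -
  have "\<forall>\<^sub>F n in sequentially. \<not> has_3cycle (Qs n) \<and> \<not> has_3cycle (Qs (Suc n))"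
    using assms eventually_sequentially_Suc[of "\<lambda>n. \<not> has_3cycle (Qs n)"]
    by (simp only: eventually_conj_iff)
  then have "\<forall>\<^sub>F n in sequentially. is_source (Qs n) (M (Suc n)) \<or> is_sink (Qs n) (M (Suc n))"
    by (rule eventually_mono) (cases rule: Qs_step_cases, auto simp: heavy_cycle_def)
  then show ?thesis
    by (subst eventually_sequentially_Suc[symmetric]) simp
qed

lemma eventually_cycle_preserving:
  "\<forall>\<^sub>F i in sequentially. cycle_preserving V (Qs (i - 1)) (M i)"
proof -
  have "\<forall>\<^sub>F n in sequentially. cycle_preserving V (Qs n) (M (Suc n))"
    using eventually_3cycle_dichotomy
  proof
    assume "\<forall>\<^sub>F n in sequentially. has_3cycle (Qs n)"
    then have "\<forall>\<^sub>F n in sequentially. has_3cycle (Qs (Suc n))"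
      by (simp only: eventually_sequentially_Suc[of "\<lambda>n. has_3cycle (Qs n)"])
    moreover have "cycle_preserving V (Qs n) (M (Suc n))" if "has_3cycle (Qs (Suc n))" for n
      using that oriented_3cycle_Qs_iff[of "Suc n"] by (intro cycle_preservingI card_V) simp
    ultimately show ?thesis
      by (rule eventually_mono)
  next
    assume "\<forall>\<^sub>F n in sequentially. \<not> has_3cycle (Qs n)"
    then show ?thesis
      by (rule eventually_mono) (intro cycle_preservingI card_V, simp add: oriented_3cycle_Qs_iff)
  qed
  then show ?thesis
    by (subst eventually_sequentially_Suc[symmetric]) simp
qed

end

theorem mainTheorem16:
  fixes Q :: quiver and M :: "nat \<Rightarrow> nat"
  defines "V \<equiv> {0, 1, 2} :: nat set"
  assumes "is_quiver V Q"
    and "mutation_abundant V Q"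
    and "\<forall>i\<ge>1. M i \<in> V"
    and "\<forall>i\<ge>1. M i \<noteq> M (Suc i)"
  shows "((\<exists>N. \<forall>i\<ge>N. acyclic_q (qseq Q M i))
            \<noteq> (\<exists>N. \<forall>i\<ge>N. oriented_3cycle (qseq Q M i) V))
       \<and> ((\<exists>N. \<forall>i\<ge>N. acyclic_q (qseq Q M i)) \<longrightarrow>
            (\<exists>N. \<forall>i\<ge>N. i \<ge> 1 \<longrightarrow>
               is_source (qseq Q M (i - 1)) (M i) \<or> is_sink (qseq Q M (i - 1)) (M i)))
       \<and> (\<exists>i0. \<forall>i>i0. cycle_preserving V (qseq Q M (i - 1)) (M i))"
proof -
  interpret abundant_rank3_sequence V Q M
    using assms by unfold_locales (simp_all add: V_def)
  have acyclic:
    "(\<exists>N. \<forall>i\<ge>N. acyclic_q (Qs i)) \<longleftrightarrow> (\<forall>\<^sub>F n in sequentially. \<not> has_3cycle (Qs n))"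
    by (simp add: eventually_sequentially acyclic_q_Qs_iff)
  have cyclic:
    "(\<exists>N. \<forall>i\<ge>N. oriented_3cycle (Qs i) V) \<longleftrightarrow> (\<forall>\<^sub>F n in sequentially. has_3cycle (Qs n))"
    by (simp add: eventually_sequentially oriented_3cycle_Qs_iff)
  have "\<not> ((\<forall>\<^sub>F n in sequentially. has_3cycle (Qs n))
      \<and> (\<forall>\<^sub>F n in sequentially. \<not> has_3cycle (Qs n)))"
    by (auto dest: eventually_conj)
  then have "(\<exists>N. \<forall>i\<ge>N. acyclic_q (Qs i)) \<noteq> (\<exists>N. \<forall>i\<ge>N. oriented_3cycle (Qs i) V)"
    using eventually_3cycle_dichotomy unfolding acyclic cyclic by blast
  moreover have "(\<exists>N. \<forall>i\<ge>N. acyclic_q (Qs i)) \<longrightarrow>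
      (\<exists>N. \<forall>i\<ge>N. i \<ge> 1 \<longrightarrow> is_source (Qs (i - 1)) (M i) \<or> is_sink (Qs (i - 1)) (M i))"
    using eventually_source_or_sink unfolding acyclic eventually_sequentially by blast
  moreover obtain i0 where "\<forall>i\<ge>i0. cycle_preserving V (Qs (i - 1)) (M i)"
    using eventually_cycle_preserving unfolding eventually_sequentially by blast
  then have "\<exists>i0. \<forall>i>i0. cycle_preserving V (Qs (i - 1)) (M i)"
    by (blast intro: less_imp_le)
  ultimately show ?thesis
    by blast
qed

end
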